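(* For every integer $K\ge1$, $$s(5,K,3)=\begin{cases}\left\lceil\frac{K}{2}\right\rceil & \text{if } K\equiv 0 \text{ or } 9 \pmod{10},\\[2pt] \left\lceil\frac{K}{2}\right\rceil+1 & \text{otherwise.}\end{cases}$$
   Context: A placement delivery array $S$-PDA$(F,K,Z)$ is an $F\times K$ array $R=(r_{j,k})$, $1\le j\le F$, $1\le k\le K$, over a finite set $S$ such that: (1) each cell is either empty or contains an element of $S$; (2) each column contains exactly $Z$ empty cells; (3) each element of $S$ occurs at most once in each row and at most once in each column; (4) if two distinct nonempty cells satisfy $r_{j_1,k_1}=r_{j_2,k_2}=t\in S$, then the cells $r_{j_1,k_2}$ and $r_{j_2,k_1}$ are empty. For integers $F,K\ge1$, $0\le Z\le F$, define $s(F,K,Z)=\min\{|S| : \text{there exists an } S\text{-PDA}(F,K,Z)\}$. *)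

theory Defs
  imports Main
begin

text \<open>An S-PDA(F,K,Z): an F x K array with rows indexed by 0..<F and columns by 0..<K.
  A cell is None (empty) or Some t with t in S.\<close>

definition is_PDA :: "nat set \<Rightarrow> nat \<Rightarrow> nat \<Rightarrow> nat \<Rightarrow> (nat \<Rightarrow> nat \<Rightarrow> nat option) \<Rightarrow> bool" where
  "is_PDA S F K Z R \<longleftrightarrow>
     finite S \<and>
     (\<forall>j<F. \<forall>k<K. \<forall>t. R j k = Some t \<longrightarrow> t \<in> S) \<and>
     (\<forall>k<K. card {j. j < F \<and> R j k = None} = Z) \<and>
     (\<forall>j<F. \<forall>k1<K. \<forall>k2<K. \<forall>t. R j k1 = Some t \<and> R j k2 = Some t \<longrightarrow> k1 = k2) \<and>
     (\<forall>k<K. \<forall>j1<F. \<forall>j2<F. \<forall>t. R j1 k = Some t \<and> R j2 k = Some t \<longrightarrow> j1 = j2) \<and>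
     (\<forall>j1<F. \<forall>j2<F. \<forall>k1<K. \<forall>k2<K. \<forall>t.
        (j1, k1) \<noteq> (j2, k2) \<and> R j1 k1 = Some t \<and> R j2 k2 = Some t \<longrightarrow>
        R j1 k2 = None \<and> R j2 k1 = None)"

text \<open>s(F,K,Z): the minimum size of S over all S-PDA(F,K,Z). Symbols are taken
  to be natural numbers, which is no loss of generality since only |S| matters.\<close>

definition s_PDA :: "nat \<Rightarrow> nat \<Rightarrow> nat \<Rightarrow> nat" where
  "s_PDA F K Z = (LEAST n. \<exists>S R. is_PDA S F K Z R \<and> card S = n)"

end

theory Submission
  imports Defs
begin

(* Every column has exactly two filled cells, and a symbol occurring at (j, k) forces the rows of
   all its other occurrences to be empty in column k; so a symbol occurs at most four times and
   4 |S| >= 2 K.  For a finer count, fix a row v and let the balance of a symbol t be the number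
   of its occurrences in row v minus the number of its occurrences outside row v in columns whose
   row-v cell is filled.  Pairing each filled cell of row v with the other filled cell of its
   column shows that the balances in row v sum to 0, while a symbol occurring four times has
   balance 1 or -4, i.e. 1 mod 5.  If 4 |S| <= 2 K + 2, at most two occurrences are missing in
   total, and evaluating the congruence in a well-chosen row gives |S| = 0 mod 5, whence
   K = 2 |S| or K = 2 |S| - 1 is 0 or 9 mod 10.  Conversely, copies of a 5 x 10 array with five
   symbols, followed by a truncated small array, attain the bound. *)

locale PDA =
  fixes S :: "nat set" and F K Z :: nat and R :: "nat \<Rightarrow> nat \<Rightarrow> nat option"
  assumes finite_symbols: "finite S"
    and symbol_in_S: "j < F \<Longrightarrow> k < K \<Longrightarrow> R j k = Some t \<Longrightarrow> t \<in> S"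
    and card_empty_column: "k < K \<Longrightarrow> card {j. j < F \<and> R j k = None} = Z"
    and row_distinct:
      "j < F \<Longrightarrow> k1 < K \<Longrightarrow> k2 < K \<Longrightarrow> R j k1 = Some t \<Longrightarrow> R j k2 = Some t \<Longrightarrow> k1 = k2"
    and column_distinct:
      "k < K \<Longrightarrow> j1 < F \<Longrightarrow> j2 < F \<Longrightarrow> R j1 k = Some t \<Longrightarrow> R j2 k = Some t \<Longrightarrow> j1 = j2"
    and cross_empty: "j1 < F \<Longrightarrow> j2 < F \<Longrightarrow> k1 < K \<Longrightarrow> k2 < K \<Longrightarrow> (j1, k1) \<noteq> (j2, k2) \<Longrightarrow>
      R j1 k1 = Some t \<Longrightarrow> R j2 k2 = Some t \<Longrightarrow> R j1 k2 = None \<and> R j2 k1 = None"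

lemma is_PDA_iff_PDA: "is_PDA S F K Z R \<longleftrightarrow> PDA S F K Z R"
  unfolding is_PDA_def PDA_def by (simp add: imp_conjL)

section \<open>Occurrences of a symbol\<close>

context PDA
begin

definition occ :: "nat \<Rightarrow> (nat \<times> nat) set" where
  "occ t = {c. fst c < F \<and> snd c < K \<and> R (fst c) (snd c) = Some t}"

definition filled :: "(nat \<times> nat) set" where
  "filled = {c. fst c < F \<and> snd c < K \<and> R (fst c) (snd c) \<noteq> None}"

lemma finite_occ: "finite (occ t)"
  by (rule finite_subset[of _ "{..<F} \<times> {..<K}"]) (auto simp: occ_def)

lemma occ_cross: "c \<in> occ t \<Longrightarrow> c' \<in> occ t \<Longrightarrow> c \<noteq> c' \<Longrightarrow> R (fst c) (snd c') = None"
  unfolding occ_def using cross_empty[of "fst c" "fst c'" "snd c" "snd c'" t]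
  by (auto simp: prod_eq_iff)

lemma occ_disjoint: "t \<noteq> t' \<Longrightarrow> occ t \<inter> occ t' = {}"
  by (auto simp: occ_def)

lemma inj_on_fst_occ: "inj_on fst (occ t)"
proof (rule inj_onI)
  fix c c' assume "c \<in> occ t" "c' \<in> occ t" "fst c = fst c'"
  then show "c = c'"
    unfolding occ_def using row_distinct[of "fst c" "snd c" "snd c'" t] by (auto simp: prod_eq_iff)
qed

lemma card_filled_column:
  assumes "k < K"
  shows "card {j. j < F \<and> R j k \<noteq> None} = F - Z"
proof -
  have "F = card ({j. j < F \<and> R j k = None} \<union> {j. j < F \<and> R j k \<noteq> None})"
    by (rule trans[OF card_lessThan[symmetric] arg_cong[where f = card]]) auto
  also have "\<dots> = card {j. j < F \<and> R j k = None} + card {j. j < F \<and> R j k \<noteq> None}"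
    by (rule card_Un_disjoint) auto
  finally show ?thesis using card_empty_column[OF assms] by simp
qed

lemma rows_of_other_occ_empty:
  assumes "c \<in> occ t"
  shows "fst ` (occ t - {c}) \<subseteq> {j. j < F \<and> R j (snd c) = None}"
  using assms occ_cross[of _ t c] by (auto simp: occ_def)

lemma card_rows_of_other_occ: "c \<in> occ t \<Longrightarrow> card (fst ` (occ t - {c})) = card (occ t) - 1"
  using card_image[OF inj_on_subset[OF inj_on_fst_occ[of t] Diff_subset[of "occ t" "{c}"]]]
  by (simp add: finite_occ)

lemma card_occ_le: "card (occ t) \<le> Z + 1"
proof (cases "occ t = {}")
  case False
  then obtain c where c: "c \<in> occ t" by blast
  then have "card (fst ` (occ t - {c})) \<le> Z"
    using card_mono[OF _ rows_of_other_occ_empty[OF c]] card_empty_column[of "snd c"]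
    by (simp add: occ_def)
  then show ?thesis using card_rows_of_other_occ[OF c] by simp
qed simp

lemma sum_card_occ_filter: "(\<Sum>t\<in>S. card {c \<in> occ t. P c}) = card {c \<in> filled. P c}"
proof -
  have "(\<Sum>t\<in>S. card {c \<in> occ t. P c}) = card (\<Union>t\<in>S. {c \<in> occ t. P c})"
    by (rule card_UN_disjoint[symmetric]) (use finite_symbols finite_occ occ_disjoint in auto)
  also have "(\<Union>t\<in>S. {c \<in> occ t. P c}) = {c \<in> filled. P c}"
    by (auto simp: occ_def filled_def symbol_in_S)
  finally show ?thesis .
qed

lemma card_filled: "card filled = K * (F - Z)"
proof -
  have "filled = (\<Union>k<K. (\<lambda>j. (j, k)) ` {j. j < F \<and> R j k \<noteq> None})"
    by (auto simp: filled_def)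
  also have "card \<dots> = (\<Sum>k<K. card ((\<lambda>j. (j, k)) ` {j. j < F \<and> R j k \<noteq> None}))"
    by (rule card_UN_disjoint) auto
  also have "\<dots> = (\<Sum>k<K. F - Z)"
    by (rule sum.cong) (simp_all add: card_image inj_on_def card_filled_column del: not_None_eq)
  finally show ?thesis by simp
qed

lemma sum_card_occ: "(\<Sum>t\<in>S. card (occ t)) = K * (F - Z)"
  using sum_card_occ_filter[of "\<lambda>_. True"] card_filled by simp

lemma card_symbols_lower: "K * (F - Z) \<le> (Z + 1) * card S"
  using sum_bounded_above[of S "\<lambda>t. card (occ t)" "Z + 1"] card_occ_le sum_card_occ
  by (simp add: mult.commute)

end

section \<open>Row balances\<close>

locale PDA_two_filled = PDA +
  assumes two_filled: "F = Z + 2"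
begin

lemma card_two_filled_column: "k < K \<Longrightarrow> card {j. j < F \<and> R j k \<noteq> None} = 2"
  using card_filled_column two_filled by simp

lemma unique_partner_row:
  assumes "k < K" "v < F" "R v k \<noteq> None"
  shows "\<exists>!j. j < F \<and> j \<noteq> v \<and> R j k \<noteq> None"
proof -
  have "card ({j. j < F \<and> R j k \<noteq> None} - {v}) = 1"
    using card_two_filled_column[OF assms(1)] assms(2,3) by simp
  then obtain u where u: "{j. j < F \<and> R j k \<noteq> None} - {v} = {u}"
    by (auto simp: card_1_singleton_iff simp del: not_None_eq)
  show ?thesis
  proof (rule ex1I)
    show "u < F \<and> u \<noteq> v \<and> R u k \<noteq> None" using u by blast
    show "j = u" if "j < F \<and> j \<noteq> v \<and> R j k \<noteq> None" for j using u that by blast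
  qed
qed

definition balance :: "nat \<Rightarrow> nat \<Rightarrow> int" where
  "balance t v = int (card {c \<in> occ t. fst c = v})
     - int (card {c \<in> occ t. fst c \<noteq> v \<and> R v (snd c) \<noteq> None})"

lemma card_partners_of_row:
  assumes "v < F"
  shows "card {c \<in> filled. fst c \<noteq> v \<and> R v (snd c) \<noteq> None} = card {c \<in> filled. fst c = v}"
    (is "card ?partners = card ?row")
proof (rule bij_betw_same_card[of "\<lambda>c. (v, snd c)"], rule bij_betw_imageI)
  show "inj_on (\<lambda>c. (v, snd c)) ?partners"
  proof (rule inj_onI)
    fix c c' assume c: "c \<in> ?partners" and c': "c' \<in> ?partners" and eq: "(v, snd c) = (v, snd c')"
    have "fst c = fst c'"
      using unique_partner_row[of "snd c" v] c c' eq assms by (auto simp: filled_def simp del: not_None_eq)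
    with eq show "c = c'" by (simp add: prod_eq_iff)
  qed
  show "(\<lambda>c. (v, snd c)) ` ?partners = ?row"
  proof (intro equalityI subsetI)
    fix c assume "c \<in> (\<lambda>c. (v, snd c)) ` ?partners"
    then show "c \<in> ?row" using assms by (auto simp: filled_def simp del: not_None_eq)
  next
    fix c assume c: "c \<in> ?row"
    then obtain j where j: "j < F" "j \<noteq> v" "R j (snd c) \<noteq> None"
      using unique_partner_row[of "snd c" v] by (auto simp: filled_def simp del: not_None_eq)
    then have "(j, snd c) \<in> ?partners" using c by (auto simp: filled_def simp del: not_None_eq)
    moreover have "c = (v, snd (j, snd c))" using c by (simp add: prod_eq_iff)
    ultimately show "c \<in> (\<lambda>c. (v, snd c)) ` ?partners" by blast
  qed
qed

lemma sum_balance: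
  assumes "v < F"
  shows "(\<Sum>t\<in>S. balance t v) = 0"
proof -
  have "(\<Sum>t\<in>S. balance t v) = int (\<Sum>t\<in>S. card {c \<in> occ t. fst c = v})
      - int (\<Sum>t\<in>S. card {c \<in> occ t. fst c \<noteq> v \<and> R v (snd c) \<noteq> None})"
    by (simp add: balance_def sum_subtractf del: not_None_eq)
  also have "\<dots> = 0"
    using card_partners_of_row[OF assms] by (simp only: sum_card_occ_filter)
  finally show ?thesis .
qed

lemma balance_occupied_row:
  assumes "c \<in> occ t"
  shows "balance t (fst c) = 1"
proof -
  have "{c' \<in> occ t. fst c' = fst c} = {c}"
    using assms inj_on_fst_occ[of t] by (auto dest: inj_onD)
  moreover have "{c' \<in> occ t. fst c' \<noteq> fst c \<and> R (fst c) (snd c') \<noteq> None} = {}"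
    using occ_cross[OF assms] by fastforce
  ultimately show ?thesis unfolding balance_def by (simp only: card.empty) simp
qed

lemma balance_full_symbol_free_row:
  assumes full: "card (occ t) = Z + 1" and v: "v < F" "v \<notin> fst ` occ t"
  shows "balance t v = - int (Z + 1)"
proof -
  have other_row: "fst c \<noteq> v" if "c \<in> occ t" for c
    using v(2) that by (metis image_eqI)
  have partner: "R v (snd c) \<noteq> None" if c: "c \<in> occ t" for c
  proof
    assume "R v (snd c) = None"
    then have "insert v (fst ` (occ t - {c})) \<subseteq> {j. j < F \<and> R j (snd c) = None}"
      using rows_of_other_occ_empty[OF c] v(1) \<open>R v (snd c) = None\<close> by auto
    then have "card (insert v (fst ` (occ t - {c}))) \<le> Z"
      using card_mono[of "{j. j < F \<and> R j (snd c) = None}"] card_empty_column[of "snd c"] c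
      by (simp add: occ_def)
    moreover have "v \<notin> fst ` (occ t - {c})" using v(2) by auto
    ultimately show False
      using card_rows_of_other_occ[OF c] full by (simp add: finite_occ)
  qed
  have "{c \<in> occ t. fst c \<noteq> v \<and> R v (snd c) \<noteq> None} = occ t"
    using other_row partner by blast
  moreover have "{c \<in> occ t. fst c = v} = {}" using other_row by blast
  ultimately show ?thesis unfolding balance_def by (simp only: card.empty full)
qed

lemma balance_full_symbol_mod:
  assumes "card (occ t) = Z + 1" and "v < F"
  shows "balance t v mod int (Z + 2) = 1"
proof (cases "v \<in> fst ` occ t")
  case True
  then show ?thesis using balance_occupied_row by auto
next
  case False
  then have "balance t v = 1 - int (Z + 2)" using balance_full_symbol_free_row assms by simp
  then show ?thesis by (simp only: minus_mod_self2) simp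
qed

lemma exists_balance_zero:
  assumes "2 * card (occ t) < F"
  shows "\<exists>v<F. balance t v = 0"
proof -
  let ?busy = "\<Union>c\<in>occ t. {j. j < F \<and> R j (snd c) \<noteq> None}"
  have "card ?busy \<le> (\<Sum>c\<in>occ t. card {j. j < F \<and> R j (snd c) \<noteq> None})"
    using card_UN_le[OF finite_occ] by blast
  also have "\<dots> = (\<Sum>c\<in>occ t. 2)"
    by (rule sum.cong) (simp_all add: occ_def card_two_filled_column del: not_None_eq)
  finally have "\<not> {..<F} \<subseteq> ?busy"
    using assms card_mono[of ?busy "{..<F}"] finite_occ by fastforce
  then obtain v where v: "v < F" "v \<notin> ?busy" by blast
  then have "{c \<in> occ t. fst c = v} = {}" "{c \<in> occ t. fst c \<noteq> v \<and> R v (snd c) \<noteq> None} = {}"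
    by (auto simp: occ_def)
  then have "balance t v = 0" unfolding balance_def by (simp only: card.empty)
  with v(1) show ?thesis by blast
qed

lemma balance_congruence:
  assumes "A \<subseteq> S" and full: "\<forall>t\<in>S - A. card (occ t) = Z + 1" and "v < F"
  shows "(int (card S) - int (card A) + (\<Sum>t\<in>A. balance t v)) mod int (Z + 2) = 0"
proof -
  have "finite A" using finite_subset[OF assms(1) finite_symbols] .
  have "(\<Sum>t\<in>S - A. balance t v) mod int (Z + 2)
      = (\<Sum>t\<in>S - A. balance t v mod int (Z + 2)) mod int (Z + 2)"
    by (simp add: mod_sum_eq)
  also have "\<dots> = int (card (S - A)) mod int (Z + 2)"
    using balance_full_symbol_mod full \<open>v < F\<close> by simp
  finally have rest: "(\<Sum>t\<in>S - A. balance t v) mod int (Z + 2) = int (card (S - A)) mod int (Z + 2)" .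
  have "(\<Sum>t\<in>S - A. balance t v) + (\<Sum>t\<in>A. balance t v) = 0"
    using sum_balance[OF \<open>v < F\<close>] sum.subset_diff[OF assms(1) finite_symbols, of "\<lambda>t. balance t v"]
    by simp
  then have "(int (card (S - A)) + (\<Sum>t\<in>A. balance t v)) mod int (Z + 2) = 0"
    using rest by (metis mod_add_left_eq mod_0)
  moreover have "card (S - A) = card S - card A" by (rule card_Diff_subset[OF \<open>finite A\<close> assms(1)])
  moreover have "card A \<le> card S" by (rule card_mono[OF finite_symbols assms(1)])
  ultimately show ?thesis by (simp add: of_nat_diff)
qed

lemma card_symbols_mod_if_all_full:
  assumes "\<forall>t\<in>S. card (occ t) = Z + 1"
  shows "card S mod (Z + 2) = 0"
proof -
  have "int (card S) mod int (Z + 2) = 0"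
    using balance_congruence[of "{}" 0] assms two_filled by simp
  then show ?thesis by (metis of_nat_mod of_nat_eq_0_iff)
qed

lemma no_lone_deficient_symbol:
  assumes "t1 \<in> S" and "occ t1 \<noteq> {}" and "2 * card (occ t1) < F"
    and full: "\<forall>t\<in>S - {t1}. card (occ t) = Z + 1"
  shows False
proof -
  obtain c where c: "c \<in> occ t1" using assms(2) by blast
  then have "fst c < F" by (simp add: occ_def)
  obtain x where x: "x < F" "balance t1 x = 0" using exists_balance_zero[OF assms(3)] by blast
  have "(int (card S) - 1 + balance t1 (fst c)) mod int (Z + 2) = 0"
    using balance_congruence[of "{t1}" "fst c"] assms(1) full \<open>fst c < F\<close> by simp
  then have "int (card S) mod int (Z + 2) = 0" using balance_occupied_row[OF c] by simp
  then have "int (Z + 2) dvd int (card S)" by (simp only: mod_eq_0_iff_dvd)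
  moreover have "(int (card S) - 1 + balance t1 x) mod int (Z + 2) = 0"
    using balance_congruence[of "{t1}" x] assms(1) full x(1) by simp
  then have "(int (card S) - 1) mod int (Z + 2) = 0" using x(2) by simp
  then have "int (Z + 2) dvd int (card S) - 1" by (simp only: mod_eq_0_iff_dvd)
  ultimately have "int (Z + 2) dvd int (card S) - (int (card S) - 1)" by (rule dvd_diff)
  then show False by simp
qed

lemma card_symbols_mod_if_two_deficient:
  assumes "t1 \<in> S" "t2 \<in> S" "t1 \<noteq> t2" and "F < card (occ t1) + card (occ t2)"
    and full: "\<forall>t\<in>S - {t1, t2}. card (occ t) = Z + 1"
  shows "card S mod (Z + 2) = 0"
proof -
  have "fst ` occ t1 \<inter> fst ` occ t2 \<noteq> {}"
  proof
    assume "fst ` occ t1 \<inter> fst ` occ t2 = {}"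
    then have "card (fst ` occ t1 \<union> fst ` occ t2) = card (occ t1) + card (occ t2)"
      by (simp add: card_Un_disjoint finite_occ card_image inj_on_fst_occ)
    moreover have "fst ` occ t1 \<union> fst ` occ t2 \<subseteq> {..<F}" by (auto simp: occ_def)
    then have "card (fst ` occ t1 \<union> fst ` occ t2) \<le> F"
      using card_mono[of "{..<F}"] by fastforce
    ultimately show False using assms(4) by simp
  qed
  then obtain c1 c2 where c: "c1 \<in> occ t1" "c2 \<in> occ t2" "fst c1 = fst c2" by auto
  then have "fst c1 < F" by (simp add: occ_def)
  have "(int (card S) - 2 + (balance t1 (fst c1) + balance t2 (fst c2))) mod int (Z + 2) = 0"
    using balance_congruence[of "{t1, t2}" "fst c1"] assms(1-3) full \<open>fst c1 < F\<close> c(3)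
    by simp
  then have "int (card S) mod int (Z + 2) = 0"
    using balance_occupied_row[OF c(1)] balance_occupied_row[OF c(2)] by simp
  then show ?thesis by (metis of_nat_mod of_nat_eq_0_iff)
qed

end

section \<open>The lower bound\<close>

lemma sum_nat_eq_2_cases [consumes 2, case_names single pair]:
  fixes f :: "'a \<Rightarrow> nat"
  assumes "finite A" and "sum f A = 2"
  obtains (single) a where "a \<in> A" "f a = 2" "\<forall>x\<in>A - {a}. f x = 0"
    | (pair) a b where "a \<in> A" "b \<in> A" "a \<noteq> b" "f a = 1" "f b = 1" "\<forall>x\<in>A - {a, b}. f x = 0"
proof -
  have "\<exists>a\<in>A. 0 < f a" using assms(2) by (intro sum_SucD[of f A 1]) simp
  then obtain a where a: "a \<in> A" "0 < f a" by blast
  have rest: "sum f (A - {a}) = 2 - f a" and "f a \<le> 2"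
    using sum.remove[OF assms(1) a(1), of f] assms(2) by simp_all
  consider "f a = 2" | "f a = 1" using a(2) \<open>f a \<le> 2\<close> by linarith
  then show thesis
  proof cases
    case 1
    then have "\<forall>x\<in>A - {a}. f x = 0" using rest assms(1) by simp
    with a(1) 1 show thesis by (rule single)
  next
    case 2
    then have "sum f (A - {a}) = 1" using rest by simp
    then have "\<exists>b\<in>A - {a}. f b = 1 \<and> (\<forall>x\<in>A - {a}. b \<noteq> x \<longrightarrow> f x = 0)"
      using sum_eq_1_iff[of "A - {a}" f] assms(1) by simp
    then obtain b where b: "b \<in> A - {a}" "f b = 1" "\<forall>x\<in>A - {a}. b \<noteq> x \<longrightarrow> f x = 0"
      by blast
    show thesis by (rule pair[of a b]) (use a(1) b 2 in auto)
  qed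
qed

lemma card_symbols_mod_5_if_tight:
  assumes "is_PDA S 5 K 3 R" and tight: "4 * card S \<le> 2 * K + 2"
  shows "card S mod 5 = 0"
proof -
  interpret PDA_two_filled S 5 K 3 R
    using assms(1) by (simp add: is_PDA_iff_PDA PDA_two_filled_def PDA_two_filled_axioms_def)
  define d where "d t = 4 - card (occ t)" for t
  have full_iff: "card (occ t) = 4 \<longleftrightarrow> d t = 0" for t
    using card_occ_le[of t] by (auto simp: d_def)
  have "(\<Sum>t\<in>S. d t) = 4 * card S - 2 * K"
    using sum_subtractf_nat[of S "\<lambda>t. card (occ t)" "\<lambda>_. 4"] card_occ_le sum_card_occ
    by (simp add: d_def)
  moreover have "2 * K \<le> 4 * card S" using card_symbols_lower by simp
  ultimately have "(\<Sum>t\<in>S. d t) = 2 * (2 * card S - K)" by linarith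
  moreover have "2 * card S - K \<le> 1" using tight by linarith
  ultimately have "(\<Sum>t\<in>S. d t) = 0 \<or> (\<Sum>t\<in>S. d t) = 2" by presburger
  then show ?thesis
  proof
    assume "(\<Sum>t\<in>S. d t) = 0"
    then show ?thesis using card_symbols_mod_if_all_full full_iff finite_symbols by simp
  next
    assume "(\<Sum>t\<in>S. d t) = 2"
    with finite_symbols show ?thesis
    proof (cases rule: sum_nat_eq_2_cases)
      case (single t1)
      then have "card (occ t1) = 2" by (simp add: d_def)
      moreover from this have "occ t1 \<noteq> {}" by auto
      ultimately have False using no_lone_deficient_symbol[of t1] single full_iff by simp
      then show ?thesis ..
    next
      case (pair t1 t2)
      then have "card (occ t1) = 3" "card (occ t2) = 3" by (simp_all add: d_def)
      then show ?thesis using card_symbols_mod_if_two_deficient[of t1 t2] pair full_iff by simp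
    qed
  qed
qed

definition s53 :: "nat \<Rightarrow> nat" where
  "s53 K = (if K mod 10 = 0 \<or> K mod 10 = 9 then (K + 1) div 2 else (K + 1) div 2 + 1)"

lemma s53_le:
  fixes n :: nat
  assumes lower: "2 * K \<le> 4 * n" and tight: "4 * n \<le> 2 * K + 2 \<Longrightarrow> n mod 5 = 0"
  shows "s53 K \<le> n"
proof (cases "4 * n \<le> 2 * K + 2")
  case True
  then have "n mod 5 = 0" by (rule tight)
  consider "K = 2 * n" | "K + 1 = 2 * n" using True lower by linarith
  then show ?thesis
  proof cases
    case 1
    then have "K mod 10 = 0" using \<open>n mod 5 = 0\<close> by presburger
    with 1 show ?thesis by (simp add: s53_def)
  next
    case 2
    then have "K mod 10 = 9" using \<open>n mod 5 = 0\<close> by presburger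
    with 2 show ?thesis by (simp add: s53_def)
  qed
next
  case False
  then have "(K + 1) div 2 + 1 \<le> n" by linarith
  then show ?thesis by (simp add: s53_def)
qed

lemma s53_le_card_symbols:
  assumes "is_PDA S 5 K 3 R"
  shows "s53 K \<le> card S"
proof -
  interpret PDA S 5 K 3 R using assms by (simp add: is_PDA_iff_PDA)
  have "2 * K \<le> 4 * card S" using card_symbols_lower by simp
  moreover have "4 * card S \<le> 2 * K + 2 \<Longrightarrow> card S mod 5 = 0"
    by (rule card_symbols_mod_5_if_tight[OF assms])
  ultimately show ?thesis by (rule s53_le)
qed

section \<open>Constructions\<close>

lemma is_PDA_truncate:
  assumes "is_PDA S F K Z R" and "K' \<le> K"
  shows "is_PDA S F K' Z R"
proof -
  interpret PDA S F K Z R using assms(1) by (simp add: is_PDA_iff_PDA)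
  have K: "k < K" if "k < K'" for k using that assms(2) by simp
  show ?thesis unfolding is_PDA_iff_PDA
    by unfold_locales
      (fact finite_symbols | (rule symbol_in_S card_empty_column row_distinct column_distinct
        cross_empty; (assumption | erule K)))+
qed

lemma is_PDA_relabel:
  assumes "is_PDA S F K Z R" and "inj_on f S"
  shows "is_PDA (f ` S) F K Z (\<lambda>j k. map_option f (R j k))"
proof -
  interpret PDA S F K Z R using assms(1) by (simp add: is_PDA_iff_PDA)
  have same: "t1 = t2" if "j1 < F" "k1 < K" "R j1 k1 = Some t1" "j2 < F" "k2 < K" "R j2 k2 = Some t2"
      "f t1 = f t2" for j1 k1 t1 j2 k2 t2
    using that symbol_in_S inj_onD[OF assms(2)] by metis
  show ?thesis unfolding is_PDA_iff_PDA
  proof unfold_locales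
    show "finite (f ` S)" using finite_symbols by simp
    show "card {j. j < F \<and> map_option f (R j k) = None} = Z" if "k < K" for k
      using card_empty_column[OF that] by simp
    show "t \<in> f ` S" if "j < F" "k < K" "map_option f (R j k) = Some t" for j k t
      using that symbol_in_S by auto
    show "k1 = k2" if asm: "j < F" "k1 < K" "k2 < K"
      "map_option f (R j k1) = Some t" "map_option f (R j k2) = Some t" for j k1 k2 t
    proof -
      obtain t1 t2 where "R j k1 = Some t1" "R j k2 = Some t2" "f t1 = f t2"
        using asm(4,5) by auto
      with asm(1-3) show ?thesis using same[of j k1 t1 j k2 t2] row_distinct[of j k1 k2 t1] by simp
    qed
    show "j1 = j2" if asm: "k < K" "j1 < F" "j2 < F"
      "map_option f (R j1 k) = Some t" "map_option f (R j2 k) = Some t" for k j1 j2 t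
    proof -
      obtain t1 t2 where "R j1 k = Some t1" "R j2 k = Some t2" "f t1 = f t2"
        using asm(4,5) by auto
      with asm(1-3) show ?thesis using same[of j1 k t1 j2 k t2] column_distinct[of k j1 j2 t1] by simp
    qed
    show "map_option f (R j1 k2) = None \<and> map_option f (R j2 k1) = None"
      if asm: "j1 < F" "j2 < F" "k1 < K" "k2 < K" "(j1, k1) \<noteq> (j2, k2)"
        "map_option f (R j1 k1) = Some t" "map_option f (R j2 k2) = Some t" for j1 j2 k1 k2 t
    proof -
      obtain t1 t2 where "R j1 k1 = Some t1" "R j2 k2 = Some t2" "f t1 = f t2"
        using asm(6,7) by auto
      with asm(1-5) show ?thesis using same[of j1 k1 t1 j2 k2 t2] cross_empty[of j1 j2 k1 k2 t1] by simp
    qed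
  qed
qed

lemma is_PDA_append:
  assumes "is_PDA S1 F K1 Z R1" and "is_PDA S2 F K2 Z R2" and "S1 \<inter> S2 = {}"
  shows "is_PDA (S1 \<union> S2) F (K1 + K2) Z (\<lambda>j k. if k < K1 then R1 j k else R2 j (k - K1))"
    (is "is_PDA _ _ _ _ ?R")
proof -
  interpret A: PDA S1 F K1 Z R1 using assms(1) by (simp add: is_PDA_iff_PDA)
  interpret B: PDA S2 F K2 Z R2 using assms(2) by (simp add: is_PDA_iff_PDA)
  have left: "R1 j k = Some t" "t \<in> S1" if "j < F" "k < K1" "?R j k = Some t" for j k t
    using that A.symbol_in_S by simp_all
  have right: "R2 j (k - K1) = Some t" "t \<in> S2" "k - K1 < K2"
    if "j < F" "k < K1 + K2" "\<not> k < K1" "?R j k = Some t" for j k t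
    using that B.symbol_in_S[of j "k - K1" t] by simp_all
  have no_mixed: False if "j1 < F" "j2 < F" "k1 < K1" "\<not> k2 < K1" "k2 < K1 + K2"
    "?R j1 k1 = Some t" "?R j2 k2 = Some t" for j1 j2 k1 k2 t
    using left[OF that(1,3,6)] right[OF that(2,5,4,7)] assms(3) by blast
  show ?thesis unfolding is_PDA_iff_PDA
  proof unfold_locales
    show "finite (S1 \<union> S2)" using A.finite_symbols B.finite_symbols by simp
    show "t \<in> S1 \<union> S2" if "j < F" "k < K1 + K2" "?R j k = Some t" for j k t
      using that A.symbol_in_S[of j k t] B.symbol_in_S[of j "k - K1" t] by (auto split: if_splits)
    show "card {j. j < F \<and> ?R j k = None} = Z" if "k < K1 + K2" for k
      using that A.card_empty_column[of k] B.card_empty_column[of "k - K1"]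
      by (cases "k < K1") (auto simp: not_less less_diff_conv2)
    show "k1 = k2" if "j < F" "k1 < K1 + K2" "k2 < K1 + K2" "?R j k1 = Some t" "?R j k2 = Some t"
      for j k1 k2 t
      using that no_mixed[of j j k1 k2 t] no_mixed[of j j k2 k1 t]
        A.row_distinct[of j k1 k2 t] B.row_distinct[of j "k1 - K1" "k2 - K1" t]
      by (cases "k1 < K1"; cases "k2 < K1") (auto simp: not_less less_diff_conv2)
    show "j1 = j2" if "k < K1 + K2" "j1 < F" "j2 < F" "?R j1 k = Some t" "?R j2 k = Some t"
      for k j1 j2 t
      using that A.column_distinct[of k j1 j2 t] B.column_distinct[of "k - K1" j1 j2 t]
      by (cases "k < K1") (auto simp: not_less less_diff_conv2)
    show "?R j1 k2 = None \<and> ?R j2 k1 = None"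
      if "j1 < F" "j2 < F" "k1 < K1 + K2" "k2 < K1 + K2" "(j1, k1) \<noteq> (j2, k2)"
        "?R j1 k1 = Some t" "?R j2 k2 = Some t" for j1 j2 k1 k2 t
      using that no_mixed[of j1 j2 k1 k2 t] no_mixed[of j2 j1 k2 k1 t]
        A.cross_empty[of j1 j2 k1 k2 t] B.cross_empty[of j1 j2 "k1 - K1" "k2 - K1" t]
      by (cases "k1 < K1"; cases "k2 < K1") (auto simp: not_less less_diff_conv2 eq_diff_iff)
  qed
qed

definition PDA_exists :: "nat \<Rightarrow> nat \<Rightarrow> nat \<Rightarrow> nat \<Rightarrow> bool" where
  "PDA_exists F K Z n \<longleftrightarrow> (\<exists>S R. is_PDA S F K Z R \<and> card S = n)"

lemma s_PDA_eq_Least: "s_PDA F K Z = (LEAST n. PDA_exists F K Z n)"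
  by (simp add: s_PDA_def PDA_exists_def)

lemma PDA_exists_truncate: "PDA_exists F K Z n \<Longrightarrow> K' \<le> K \<Longrightarrow> PDA_exists F K' Z n"
  unfolding PDA_exists_def using is_PDA_truncate by blast

lemma PDA_exists_append:
  assumes "PDA_exists F K1 Z n1" and "PDA_exists F K2 Z n2"
  shows "PDA_exists F (K1 + K2) Z (n1 + n2)"
proof -
  obtain S1 R1 S2 R2 where 1: "is_PDA S1 F K1 Z R1" "card S1 = n1"
    and 2: "is_PDA S2 F K2 Z R2" "card S2 = n2"
    using assms unfolding PDA_exists_def by blast
  let ?even = "\<lambda>t::nat. 2 * t" and ?odd = "\<lambda>t::nat. 2 * t + 1"
  have inj: "inj_on ?even S1" "inj_on ?odd S2" by (simp_all add: inj_on_def)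
  have disj: "?even ` S1 \<inter> ?odd ` S2 = {}" by (auto dest: arg_cong[where f = even])
  have "is_PDA (?even ` S1 \<union> ?odd ` S2) F (K1 + K2) Z
     (\<lambda>j k. if k < K1 then map_option ?even (R1 j k) else map_option ?odd (R2 j (k - K1)))"
    by (rule is_PDA_append[OF is_PDA_relabel[OF 1(1) inj(1)] is_PDA_relabel[OF 2(1) inj(2)] disj])
  moreover have "card (?even ` S1 \<union> ?odd ` S2) = n1 + n2"
  proof -
    have "finite S1" "finite S2" using 1(1) 2(1) by (simp_all add: is_PDA_def)
    then show ?thesis using 1(2) 2(2) disj card_image[OF inj(1)] card_image[OF inj(2)]
      by (simp add: card_Un_disjoint)
  qed
  ultimately show ?thesis unfolding PDA_exists_def by blast
qed

lemma PDA_exists_lessThan: "is_PDA {..<n} F K Z R \<Longrightarrow> PDA_exists F K Z n"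
  unfolding PDA_exists_def by (intro exI[of _ "{..<n}"]) auto

definition array_of_columns :: "nat option list list \<Rightarrow> nat \<Rightarrow> nat \<Rightarrow> nat option" where
  "array_of_columns cols j k = (if k < length cols \<and> j < length (cols ! k) then cols ! k ! j else None)"

lemma card_filter_upt: "card {j. j < n \<and> P j} = length (filter P [0..<n])"
proof -
  have "{j. j < n \<and> P j} = set (filter P [0..<n])" by auto
  then show ?thesis by (metis distinct_card distinct_filter distinct_upt)
qed

lemma all_less_Suc_iff: "(\<forall>k<Suc n. P k) \<longleftrightarrow> P n \<and> (\<forall>k<n. P k)"
  using less_Suc_eq by auto

lemma PDA_exists_5_2: "PDA_exists 5 2 3 2"
  by (rule PDA_exists_lessThan[where R = "array_of_columns
    [[Some 0, Some 1, None, None, None], [None, None, Some 0, Some 1, None]]"])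
    (simp add: is_PDA_def card_filter_upt numeral_eq_Suc all_less_Suc_iff array_of_columns_def)

lemma PDA_exists_5_4: "PDA_exists 5 4 3 3"
  by (rule PDA_exists_lessThan[where R = "array_of_columns
    [[None, None, None, Some 0, Some 2], [Some 1, None, Some 0, None, None],
     [None, None, Some 2, Some 1, None], [Some 2, Some 0, None, None, None]]"])
    (simp add: is_PDA_def card_filter_upt numeral_eq_Suc all_less_Suc_iff array_of_columns_def)

lemma PDA_exists_5_6: "PDA_exists 5 6 3 4"
  by (rule PDA_exists_lessThan[where R = "array_of_columns
    [[Some 0, Some 1, None, None, None], [Some 2, None, Some 1, None, None],
     [Some 3, None, None, Some 1, None], [None, Some 2, Some 0, None, None],
     [None, Some 3, None, Some 0, None], [None, None, Some 3, Some 2, None]]"])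
    (simp add: is_PDA_def card_filter_upt numeral_eq_Suc all_less_Suc_iff array_of_columns_def)

lemma PDA_exists_5_10: "PDA_exists 5 10 3 5"
  by (rule PDA_exists_lessThan[where R = "array_of_columns
    [[Some 1, Some 0, None, None, None], [Some 2, None, Some 0, None, None],
     [Some 3, None, None, Some 0, None], [Some 4, None, None, None, Some 0],
     [None, Some 2, Some 1, None, None], [None, Some 3, None, Some 1, None],
     [None, Some 4, None, None, Some 1], [None, None, Some 3, Some 2, None],
     [None, None, Some 4, None, Some 2], [None, None, None, Some 4, Some 3]]"])
    (simp add: is_PDA_def card_filter_upt numeral_eq_Suc all_less_Suc_iff array_of_columns_def)

lemma s53_add_10: "s53 (K + 10) = s53 K + 5"
proof -
  have "(K + 10 + 1) div 2 = (K + 1) div 2 + 5" by linarith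
  then show ?thesis unfolding s53_def by simp
qed

lemma PDA_exists_s53: "1 \<le> K \<Longrightarrow> PDA_exists 5 K 3 (s53 K)"
proof (induction K rule: less_induct)
  case (less K)
  consider "K \<le> 2" | "2 < K" "K \<le> 4" | "4 < K" "K \<le> 6" | "6 < K" "K \<le> 10" | "10 < K"
    by linarith
  then show ?case
  proof cases
    case 1
    then have "K = 1 \<or> K = 2" using less.prems by linarith
    then have "s53 K = 2" by (auto simp: s53_def)
    with 1 show ?thesis using PDA_exists_truncate[OF PDA_exists_5_2] by simp
  next
    case 2
    then have "K = 3 \<or> K = 4" by linarith
    then have "s53 K = 3" by (auto simp: s53_def)
    with 2 show ?thesis using PDA_exists_truncate[OF PDA_exists_5_4] by simp
  next
    case 3
    then have "K = 5 \<or> K = 6" by linarith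
    then have "s53 K = 4" by (auto simp: s53_def)
    with 3 show ?thesis using PDA_exists_truncate[OF PDA_exists_5_6] by simp
  next
    case 4
    then have "K = 7 \<or> K = 8 \<or> K = 9 \<or> K = 10" by linarith
    then have "s53 K = 5" by (auto simp: s53_def)
    with 4 show ?thesis using PDA_exists_truncate[OF PDA_exists_5_10] by simp
  next
    case 5
    have "PDA_exists 5 (K - 10) 3 (s53 (K - 10))" using 5 by (intro less.IH) auto
    then have "PDA_exists 5 (K - 10 + 10) 3 (s53 (K - 10) + 5)"
      by (rule PDA_exists_append[OF _ PDA_exists_5_10])
    then show ?thesis using 5 s53_add_10[of "K - 10"] by simp
  qed
qed

theorem mainTheorem15:
  fixes K :: nat
  assumes "K \<ge> 1"
  shows "s_PDA 5 K 3 =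
    (if K mod 10 = 0 \<or> K mod 10 = 9 then (K + 1) div 2 else (K + 1) div 2 + 1)"
proof -
  have "s_PDA 5 K 3 = s53 K"
    unfolding s_PDA_eq_Least
  proof (rule Least_equality)
    show "PDA_exists 5 K 3 (s53 K)" using assms by (rule PDA_exists_s53)
    show "s53 K \<le> n" if "PDA_exists 5 K 3 n" for n
      using that s53_le_card_symbols unfolding PDA_exists_def by blast
  qed
  then show ?thesis by (simp only: s53_def)
qed

end
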